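(* Let $n$ be a positive integer and, for $k\in\{0,\dots,n-1\}$, let \[ b_k=(-1)^{n-k}\frac{n!}{k!}\binom{2n-k-1}{n-1},\qquad \beta_k=(-1)^{n-1}\frac{(2n-k-1)!}{k!\,(n-k-1)!}. \] Let $\widetilde\Delta(z)=z^n+\sum_{k=0}^{n-1}b_kz^k+e^{-z}\sum_{k=0}^{n-1}\beta_kz^k$. If $z\in\mathbb C$ is a root of $\widetilde\Delta$ with $z\neq0$, then $\operatorname{Re}z<0$. *)

theory Defs
  imports "HOL-Analysis.Analysis"
begin

definition b_coeff :: "nat \<Rightarrow> nat \<Rightarrow> complex" where
  "b_coeff n k = (-1) ^ (n - k) * (fact n / fact k) * of_nat ((2*n - k - 1) choose (n - 1))"

definition beta_coeff :: "nat \<Rightarrow> nat \<Rightarrow> complex" where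
  "beta_coeff n k = (-1) ^ (n - 1) * fact (2*n - k - 1) / (fact k * fact (n - k - 1))"

definition Delta_tilde :: "nat \<Rightarrow> complex \<Rightarrow> complex" where
  "Delta_tilde n z = z ^ n + (\<Sum>k<n. b_coeff n k * z ^ k)
                     + exp (- z) * (\<Sum>k<n. beta_coeff n k * z ^ k)"

end

theory Submission
  imports Defs "HOL-Computational_Algebra.Polynomial"
begin

text \<open>
  Integrating t^n (1 - t)^(n-1) e^(tz) over [0, 1] by parts 2n times gives
  z^(2n) K(z) = (n-1)! e^z Delta(z) for K(z) = int_0^1 t^n (1 - t)^(n-1) e^(tz) dt:
  the signed derivatives of t^n (1 - t)^(n-1) at 1 and at 0 are exactly the coefficients
  b_k and beta_k. So it suffices that K has no zero with Re z >= 0. On the real axis K is a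
  positive integral. Otherwise K(z) = e^(z/2) (U'(z) + U(z)/2), where
  U(s) = int_0^1 (t (1 - t))^(n-1) e^((t - 1/2) s) dt solves the Bessel-type equation
  s U'' + 2n U' = s U / 4. Along the ray s = tz, 0 <= t <= 1, two energy arguments show
  that the boundary condition U'(z) = -U(z)/2 forces U = 0 on the ray, contradicting U(0) > 0.
\<close>

section \<open>Integrating polynomials against exponentials\<close>

lemma poly_exp_has_integral:
  fixes p :: "complex poly" and w :: complex and a b :: real
  assumes "w \<noteq> 0" and "(pderiv ^^ N) p = 0" and "a \<le> b"
  defines "S \<equiv> \<lambda>x. \<Sum>k<N. (-1) ^ k * poly ((pderiv ^^ k) p) x / w ^ Suc k"
  shows "((\<lambda>t. poly p (of_real t) * exp (of_real t * w)) has_integral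
           exp (of_real b * w) * S (of_real b) - exp (of_real a * w) * S (of_real a)) {a..b}"
proof -
  define S' where "S' = (\<lambda>x. \<Sum>k<N. (-1) ^ k * poly ((pderiv ^^ Suc k) p) x / w ^ Suc k)"
  have dS: "(S has_field_derivative S' x) (at x)" for x
    unfolding S_def S'_def using \<open>w \<noteq> 0\<close>
    by (auto intro!: derivative_eq_intros sum.cong simp: poly_DERIV[THEN DERIV_cong])
  have telescope: "w * S x + S' x = poly p x" for x
  proof -
    define c where "c k = (-1) ^ k * poly ((pderiv ^^ k) p) x / w ^ k" for k
    have "w * S x + S' x = (\<Sum>k<N. c k - c (Suc k))"
      using \<open>w \<noteq> 0\<close> unfolding S_def S'_def c_def sum_distrib_left sum_subtractf
      by (simp add: sum.distrib sum_negf)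
    also have "\<dots> = c 0 - c N"
      by (rule sum_lessThan_telescope')
    also have "\<dots> = poly p x"
      using assms(2) by (simp add: c_def)
    finally show ?thesis .
  qed
  have G': "((\<lambda>z. exp (z * w) * S z) has_field_derivative poly p z * exp (z * w)) (at z)" for z
  proof -
    have "((\<lambda>z. exp (z * w) * S z) has_field_derivative exp (z * w) * (w * S z + S' z)) (at z)"
      by (auto intro!: derivative_eq_intros dS simp: algebra_simps)
    then show ?thesis
      by (simp add: telescope mult.commute)
  qed
  show ?thesis
    by (rule fundamental_theorem_of_calculus[OF \<open>a \<le> b\<close>])
       (auto intro: has_vector_derivative_real_field[OF G'])
qed

lemma poly_higher_pderiv_0:
  fixes p :: "'a::{idom,semiring_char_0} poly"
  shows "poly ((pderiv ^^ k) p) 0 = fact k * coeff p k"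
  by (simp add: poly_0_coeff_0 coeff_higher_pderiv pochhammer_fact)

lemma higher_pderiv_reflect:
  fixes p :: "'a::{idom,semiring_char_0} poly"
  shows "(pderiv ^^ k) (p \<circ>\<^sub>p [:1, -1:]) = smult ((-1) ^ k) ((pderiv ^^ k) p \<circ>\<^sub>p [:1, -1:])"
proof (induction k)
  case (Suc k)
  have "pderiv [:1, -1::'a:] = [:-1:]"
    by (simp add: pderiv_pCons)
  with Suc show ?case
    by (simp add: pderiv_smult pderiv_pcompose)
qed simp

lemma poly_higher_pderiv_1:
  fixes p :: "'a::{idom,semiring_char_0} poly"
  shows "poly ((pderiv ^^ k) p) 1 = (-1) ^ k * fact k * coeff (p \<circ>\<^sub>p [:1, -1:]) k"
proof -
  have "fact k * coeff (p \<circ>\<^sub>p [:1, -1:]) k = (-1) ^ k * poly ((pderiv ^^ k) p) 1"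
    by (simp flip: poly_higher_pderiv_0 add: higher_pderiv_reflect poly_pcompose)
  then show ?thesis
    by (simp add: mult.assoc flip: power_mult_distrib)
qed

lemma coeff_linear_poly_power':
  fixes a b :: "'a::comm_ring_1"
  shows "coeff ([:a, b:] ^ m) i = (if i \<le> m then of_nat (m choose i) * b ^ i * a ^ (m - i) else 0)"
proof (cases "i \<le> m")
  case False
  have "degree ([:a, b:] ^ m) \<le> m"
    using degree_power_le[of "[:a, b:]" m] by (cases "b = 0") auto
  with False show ?thesis
    by (simp add: coeff_eq_0)
qed (simp add: coeff_linear_poly_power)

section \<open>The coefficients of Delta as derivatives of a polynomial\<close>

definition beta_poly :: "nat \<Rightarrow> complex poly" where
  "beta_poly n = monom 1 n * [:1, -1:] ^ (n - 1)"

lemma poly_beta_poly: "poly (beta_poly n) x = x ^ n * (1 - x) ^ (n - 1)"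
  by (simp add: beta_poly_def poly_monom)

lemma beta_poly_reflect: "beta_poly n \<circ>\<^sub>p [:1, -1:] = monom 1 (n - 1) * [:1, -1:] ^ n"
  unfolding poly_eq_poly_eq_iff[symmetric] by (simp add: fun_eq_iff poly_pcompose poly_beta_poly poly_monom)

lemma coeff_beta_poly:
  "coeff (beta_poly n) k =
     (if n \<le> k \<and> k - n \<le> n - 1 then (-1) ^ (k - n) * of_nat ((n - 1) choose (k - n)) else 0)"
  by (auto simp: beta_poly_def coeff_monom_mult coeff_linear_poly_power')

lemma coeff_beta_poly_reflect:
  "coeff (beta_poly n \<circ>\<^sub>p [:1, -1:]) k =
     (if n - 1 \<le> k \<and> k - (n - 1) \<le> n then (-1) ^ (k - (n - 1)) * of_nat (n choose (k - (n - 1))) else 0)"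
  by (auto simp: beta_poly_reflect coeff_monom_mult coeff_linear_poly_power')

lemma higher_pderiv_beta_poly:
  assumes "n \<ge> 1"
  shows "(pderiv ^^ (2 * n)) (beta_poly n) = 0"
  using assms by (intro poly_eqI) (simp add: coeff_higher_pderiv coeff_beta_poly)

lemma beta_poly_higher_pderiv_at_0:
  assumes "j < 2 * n"
  shows "(-1) ^ (2 * n - Suc j) * poly ((pderiv ^^ (2 * n - Suc j)) (beta_poly n)) 0 =
           (if j < n then - fact (n - 1) * beta_coeff n j else 0)"
proof (cases "j < n")
  case True
  define i where "i = n - 1 - j"
  have k: "2 * n - Suc j = n + i" and i: "n - Suc j = i" and j: "n - Suc i = j" and "i \<le> n - 1"
    using True by (auto simp: i_def)
  have binom: "of_nat ((n - 1) choose i) = (fact (n - 1) / (fact j * fact i) :: complex)"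
    using binomial_fact[OF \<open>i \<le> n - 1\<close>] by (simp add: j mult.commute)
  have sgn: "(-1) ^ (n + i) * (-1) ^ i = - ((-1) ^ (n - 1) :: complex)"
    using True by (cases n) (simp_all add: power_add)
  have "(-1) ^ (2 * n - Suc j) * poly ((pderiv ^^ (2 * n - Suc j)) (beta_poly n)) 0 =
          ((-1) ^ (n + i) * (-1) ^ i) * fact (n + i) * of_nat ((n - 1) choose i)"
    using \<open>i \<le> n - 1\<close> by (simp add: k poly_higher_pderiv_0 coeff_beta_poly)
  also have "\<dots> = - fact (n - 1) * beta_coeff n j"
    unfolding sgn binom beta_coeff_def by (simp add: k i)
  finally show ?thesis
    using True by simp
qed (use assms in \<open>simp add: poly_higher_pderiv_0 coeff_beta_poly\<close>)

lemma beta_poly_higher_pderiv_at_1: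
  assumes "j < 2 * n"
  shows "(-1) ^ (2 * n - Suc j) * poly ((pderiv ^^ (2 * n - Suc j)) (beta_poly n)) 1 =
           (if j < n then fact (n - 1) * b_coeff n j else if j = n then fact (n - 1) else 0)"
proof -
  define k where "k = 2 * n - Suc j"
  have "(-1) ^ k * poly ((pderiv ^^ k) (beta_poly n)) 1 = fact k * coeff (beta_poly n \<circ>\<^sub>p [:1, -1:]) k"
    by (simp add: poly_higher_pderiv_1 mult.assoc flip: power_mult_distrib)
  moreover have "fact k * coeff (beta_poly n \<circ>\<^sub>p [:1, -1:]) k = fact (n - 1) * b_coeff n j" if "j < n"
  proof -
    define i where "i = n - j"
    have k: "k = n - 1 + i" and "k - (n - 1) = i" "n - i = j" "i \<le> n" "n - 1 \<le> k"
      and b: "2 * n - j - 1 = k" "n - j = i"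
      using that assms by (auto simp: k_def i_def)
    have binom: "of_nat (n choose i) = (fact n / (fact j * fact i) :: complex)"
      using binomial_fact[OF \<open>i \<le> n\<close>] by (simp add: \<open>n - i = j\<close> mult.commute)
    have binom': "of_nat (k choose (n - 1)) = (fact k / (fact (n - 1) * fact i) :: complex)"
      using binomial_fact[of "n - 1" k] by (simp add: k)
    show ?thesis
      unfolding b_coeff_def coeff_beta_poly_reflect b binom'
      using \<open>k - (n - 1) = i\<close> \<open>n - 1 \<le> k\<close> \<open>i \<le> n\<close> by (simp add: binom)
  qed
  moreover have "coeff (beta_poly n \<circ>\<^sub>p [:1, -1:]) k = (if j = n then 1 else 0)" if "\<not> j < n"
    using that assms by (auto simp: k_def coeff_beta_poly_reflect)
  ultimately show ?thesis
    by (simp add: k_def)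
qed

text \<open>
  z^(2n) times the boundary term of poly_exp_has_integral for beta_poly n at x, reindexed by
  j = 2n - 1 - k.
\<close>

definition boundary_sum :: "nat \<Rightarrow> complex \<Rightarrow> complex \<Rightarrow> complex" where
  "boundary_sum n x z =
     (\<Sum>j<2 * n. (-1) ^ (2 * n - Suc j) * poly ((pderiv ^^ (2 * n - Suc j)) (beta_poly n)) x * z ^ j)"

lemma boundary_sum_at_1:
  assumes "n \<ge> 1"
  shows "boundary_sum n 1 z = fact (n - 1) * (z ^ n + (\<Sum>j<n. b_coeff n j * z ^ j))"
proof -
  have "boundary_sum n 1 z = (\<Sum>j<Suc n. (-1) ^ (2 * n - Suc j) * poly ((pderiv ^^ (2 * n - Suc j)) (beta_poly n)) 1 * z ^ j)"
    unfolding boundary_sum_def using assms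
    by (intro sum.mono_neutral_right) (auto simp: beta_poly_higher_pderiv_at_1)
  also have "\<dots> = (\<Sum>j<n. fact (n - 1) * b_coeff n j * z ^ j) + fact (n - 1) * z ^ n"
    using assms by (auto simp: beta_poly_higher_pderiv_at_1 intro!: sum.cong)
  finally show ?thesis
    by (simp add: algebra_simps sum_distrib_left)
qed

lemma boundary_sum_at_0:
  assumes "n \<ge> 1"
  shows "boundary_sum n 0 z = - fact (n - 1) * (\<Sum>j<n. beta_coeff n j * z ^ j)"
proof -
  have "boundary_sum n 0 z = (\<Sum>j<n. (-1) ^ (2 * n - Suc j) * poly ((pderiv ^^ (2 * n - Suc j)) (beta_poly n)) 0 * z ^ j)"
    unfolding boundary_sum_def using assms
    by (intro sum.mono_neutral_right) (auto simp: beta_poly_higher_pderiv_at_0)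
  also have "\<dots> = (\<Sum>j<n. - fact (n - 1) * beta_coeff n j * z ^ j)"
    by (auto simp: beta_poly_higher_pderiv_at_0 intro!: sum.cong)
  finally show ?thesis
    by (simp add: sum_distrib_left mult.assoc)
qed

section \<open>Laplace transforms of beta densities\<close>

definition beta_weight :: "nat \<Rightarrow> real \<Rightarrow> real" where
  "beta_weight n t = (t * (1 - t)) ^ (n - 1)"

definition beta_laplace :: "nat \<Rightarrow> nat \<Rightarrow> complex \<Rightarrow> complex" where
  "beta_laplace n j w = integral {0..1} (\<lambda>t. of_real (t ^ j * beta_weight n t) * exp (of_real t * w))"

lemma beta_laplace_has_integral:
  "((\<lambda>t. of_real (t ^ j * beta_weight n t) * exp (of_real t * w)) has_integral beta_laplace n j w) {0..1}"
  unfolding beta_laplace_def beta_weight_def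
  by (intro integrable_integral integrable_continuous_interval continuous_intros)

lemma beta_laplace_1_boundary_sum:
  assumes n: "n \<ge> 1" and z: "z \<noteq> 0"
  shows "z ^ (2 * n) * beta_laplace n 1 z = exp z * boundary_sum n 1 z - boundary_sum n 0 z"
proof -
  define S where "S x = (\<Sum>k<2 * n. (-1) ^ k * poly ((pderiv ^^ k) (beta_poly n)) x / z ^ Suc k)" for x
  have "of_real (t ^ 1 * beta_weight n t) = poly (beta_poly n) (of_real t)" for t
    using n by (cases n) (simp_all add: beta_weight_def poly_beta_poly power_mult_distrib)
  then have K: "beta_laplace n 1 z = exp z * S 1 - S 0"
    using poly_exp_has_integral[OF z higher_pderiv_beta_poly[OF n], of 0 1]
    by (intro has_integral_unique[OF beta_laplace_has_integral]) (simp add: S_def)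
  have scaled: "z ^ (2 * n) * S x = boundary_sum n x z" for x
  proof -
    have "z ^ (2 * n) * S x = (\<Sum>k<2 * n. (-1) ^ k * poly ((pderiv ^^ k) (beta_poly n)) x * z ^ (2 * n - Suc k))"
      unfolding S_def sum_distrib_left using z by (intro sum.cong) (auto simp: power_diff)
    also have "\<dots> = boundary_sum n x z"
      unfolding boundary_sum_def
      by (subst sum.nat_diff_reindex[symmetric]) (auto intro!: sum.cong simp: Suc_diff_Suc)
    finally show ?thesis .
  qed
  show ?thesis
    unfolding K scaled[symmetric] by (simp add: algebra_simps)
qed

lemma beta_laplace_Delta_tilde:
  assumes "n \<ge> 1" and "z \<noteq> 0"
  shows "z ^ (2 * n) * beta_laplace n 1 z = fact (n - 1) * exp z * Delta_tilde n z"
  unfolding beta_laplace_1_boundary_sum[OF assms] boundary_sum_at_1[OF assms(1)]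
    boundary_sum_at_0[OF assms(1)] Delta_tilde_def
  by (simp add: exp_minus field_simps)

lemma beta_laplace_has_field_derivative:
  "(beta_laplace n j has_field_derivative beta_laplace n (Suc j) w) (at w)"
proof -
  have "((\<lambda>w. integral (cbox 0 1) (\<lambda>t. of_real (t ^ j * beta_weight n t) * exp (of_real t * w)))
          has_field_derivative
          integral (cbox 0 1) (\<lambda>t. of_real (t ^ j * beta_weight n t) * (of_real t * exp (of_real t * w))))
        (at w)"
    unfolding beta_weight_def
    by (rule leibniz_rule_field_derivative[where U = UNIV])
       (auto intro!: derivative_eq_intros integrable_continuous_interval continuous_intros simp: split_beta)
  moreover have "(\<lambda>t. of_real (t ^ j * beta_weight n t) * (of_real t * exp (of_real t * w))) =
                 (\<lambda>t. of_real (t ^ Suc j * beta_weight n t) * exp (of_real t * w))"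
    by (simp add: fun_eq_iff)
  ultimately show ?thesis
    unfolding beta_laplace_def by (simp add: cbox_interval)
qed

lemma beta_laplace_of_real_neq_0: "beta_laplace n j (of_real r) \<noteq> 0"
proof -
  define f where "f t = t ^ j * beta_weight n t * exp (t * r)" for t
  have cont: "continuous_on (cbox 0 1) f"
    unfolding f_def beta_weight_def by (intro continuous_intros)
  have nonneg: "f t \<ge> 0" if "t \<in> cbox 0 1" for t
    using that by (auto simp: f_def beta_weight_def)
  have "f (1/2) \<noteq> 0"
    by (simp add: f_def beta_weight_def)
  then have "integral (cbox 0 1) f \<noteq> 0"
    using integral_cbox_eq_0_iff[OF cont _ nonneg] by force
  have hasint: "((\<lambda>t. of_real (f t) :: complex) has_integral of_real (integral (cbox 0 1) f)) {0..1}"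
    using has_integral_linear[OF integrable_integral[OF integrable_continuous[OF cont]] bounded_linear_of_real]
    by (simp add: o_def cbox_interval)
  have eq: "(\<lambda>t. of_real (f t)) = (\<lambda>t. of_real (t ^ j * beta_weight n t) * exp (of_real t * of_real r))"
    by (auto simp: f_def fun_eq_iff exp_of_real[symmetric])
  have "beta_laplace n j (of_real r) = of_real (integral (cbox 0 1) f)"
    using hasint unfolding eq by (rule has_integral_unique[OF beta_laplace_has_integral])
  with \<open>integral (cbox 0 1) f \<noteq> 0\<close> show ?thesis
    by simp
qed

lemma beta_laplace_ode:
  assumes "n \<ge> 1"
  shows "w * beta_laplace n 2 w + (2 * of_nat n - w) * beta_laplace n 1 w - of_nat n * beta_laplace n 0 w = 0"
proof -
  define g where "g j t = of_real (t ^ j * beta_weight n t) * exp (of_real t * w)" for j t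
  define F where "F z = (z * (1 - z)) ^ n * exp (z * w)" for z :: complex
  have dF: "(F has_field_derivative
           (of_nat n * (z * (1 - z)) ^ (n - 1) * (1 - 2 * z) + (z * (1 - z)) ^ n * w) * exp (z * w)) (at z)" for z
    unfolding F_def by (auto intro!: derivative_eq_intros simp: algebra_simps)
  have dF_eq: "(of_nat n * (z * (1 - z)) ^ (n - 1) * (1 - 2 * z) + (z * (1 - z)) ^ n * w) * exp (z * w)
                   = - (w * g 2 t + (2 * of_nat n - w) * g 1 t - of_nat n * g 0 t)" if "z = of_real t" for z t
  proof -
    define q where "q = (z * (1 - z)) ^ (n - 1)"
    have pow: "(z * (1 - z)) ^ n = z * (1 - z) * q"
      using assms by (cases n) (simp_all add: q_def)
    have g: "g j t = z ^ j * q * exp (z * w)" for j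
      using that by (simp add: g_def q_def beta_weight_def)
    show ?thesis
      unfolding q_def[symmetric] pow g by (simp add: algebra_simps power2_eq_square)
  qed
  have "((\<lambda>t. F (of_real t)) has_vector_derivative
          - (w * g 2 t + (2 * of_nat n - w) * g 1 t - of_nat n * g 0 t)) (at t within {0..1})" for t
    by (rule has_vector_derivative_real_field[OF DERIV_cong[OF dF dF_eq[OF refl]]])
  then have ftc: "((\<lambda>t. - (w * g 2 t + (2 * of_nat n - w) * g 1 t - of_nat n * g 0 t)) has_integral
               F (of_real 1) - F (of_real 0)) {0..1}"
    by (intro fundamental_theorem_of_calculus) auto
  have "F (of_real 1) - F (of_real 0) = 0"
    using assms by (simp add: F_def)
  with ftc have zero: "((\<lambda>t. w * g 2 t + (2 * of_nat n - w) * g 1 t - of_nat n * g 0 t) has_integral 0) {0..1}"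
    by (simp only: has_integral_neg_iff minus_zero)
  have "((\<lambda>t. w * g 2 t + (2 * of_nat n - w) * g 1 t - of_nat n * g 0 t) has_integral
      w * beta_laplace n 2 w + (2 * of_nat n - w) * beta_laplace n 1 w - of_nat n * beta_laplace n 0 w) {0..1}"
    unfolding g_def by (intro has_integral_diff has_integral_add has_integral_mult_right beta_laplace_has_integral)
  from has_integral_unique[OF this zero] show ?thesis .
qed

section \<open>A Bessel-type function\<close>

text \<open>
  centred_laplace n w = int_0^1 (t (1 - t))^(n-1) e^((t - 1/2) w) dt; the primed functions
  are its first two derivatives.
\<close>

definition centred_laplace :: "nat \<Rightarrow> complex \<Rightarrow> complex" where
  "centred_laplace n w = exp (- w / 2) * beta_laplace n 0 w"

definition centred_laplace' :: "nat \<Rightarrow> complex \<Rightarrow> complex" where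
  "centred_laplace' n w = exp (- w / 2) * (beta_laplace n 1 w - beta_laplace n 0 w / 2)"

definition centred_laplace'' :: "nat \<Rightarrow> complex \<Rightarrow> complex" where
  "centred_laplace'' n w = exp (- w / 2) * (beta_laplace n 2 w - beta_laplace n 1 w + beta_laplace n 0 w / 4)"

lemma centred_laplace_has_field_derivative:
  "(centred_laplace n has_field_derivative centred_laplace' n w) (at w)"
  unfolding centred_laplace_def centred_laplace'_def
  by (auto intro!: derivative_eq_intros beta_laplace_has_field_derivative simp: field_simps)

lemma centred_laplace'_has_field_derivative:
  "(centred_laplace' n has_field_derivative centred_laplace'' n w) (at w)"
  unfolding centred_laplace'_def centred_laplace''_def
  by (auto intro!: derivative_eq_intros beta_laplace_has_field_derivative simp: field_simps numeral_2_eq_2)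

lemma centred_laplace_ode:
  assumes "n \<ge> 1"
  shows "w * centred_laplace'' n w + 2 * of_nat n * centred_laplace' n w = w / 4 * centred_laplace n w"
proof -
  have "w * centred_laplace'' n w + 2 * of_nat n * centred_laplace' n w - w / 4 * centred_laplace n w =
        exp (- w / 2) * (w * beta_laplace n 2 w + (2 * of_nat n - w) * beta_laplace n 1 w - of_nat n * beta_laplace n 0 w)"
    by (simp add: centred_laplace_def centred_laplace'_def centred_laplace''_def algebra_simps)
  with beta_laplace_ode[OF assms] show ?thesis
    by simp
qed

lemma centred_laplace'_along_ray:
  assumes "n \<ge> 1"
  shows "((\<lambda>s. s ^ (2 * n) * centred_laplace' n (l * s)) has_field_derivative
           l / 4 * s ^ (2 * n) * centred_laplace n (l * s)) (at s)"
proof -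
  have pow: "s ^ (2 * n) = s * s ^ (2 * n - 1)"
    using assms by (cases n) simp_all
  have "((\<lambda>s. s ^ (2 * n) * centred_laplace' n (l * s)) has_field_derivative
          of_nat (2 * n) * s ^ (2 * n - 1) * centred_laplace' n (l * s) + s ^ (2 * n) * (centred_laplace'' n (l * s) * l))
        (at s)"
    by (auto intro!: derivative_eq_intros centred_laplace'_has_field_derivative[THEN DERIV_chain2])
  also have "of_nat (2 * n) * s ^ (2 * n - 1) * centred_laplace' n (l * s) + s ^ (2 * n) * (centred_laplace'' n (l * s) * l)
             = s ^ (2 * n - 1) * ((l * s) * centred_laplace'' n (l * s) + 2 * of_nat n * centred_laplace' n (l * s))"
    unfolding pow by (simp add: algebra_simps)
  also have "\<dots> = l / 4 * s ^ (2 * n) * centred_laplace n (l * s)"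
    unfolding centred_laplace_ode[OF assms] pow by (simp add: algebra_simps)
  finally show ?thesis .
qed

section \<open>Energy estimates along a ray\<close>

lemma backward_gronwall_nonpos:
  fixes E :: "real \<Rightarrow> real"
  assumes growth: "\<And>s. s \<in> {t..b} \<Longrightarrow> \<exists>D. (E has_real_derivative D) (at s) \<and> D + c * E s \<ge> 0"
    and "E b \<le> 0" and "t \<le> b"
  shows "E t \<le> 0"
proof -
  have "exp (c * t) * E t \<le> exp (c * b) * E b"
  proof (rule DERIV_nonneg_imp_nondecreasing[OF \<open>t \<le> b\<close>])
    fix s assume "t \<le> s" "s \<le> b"
    with growth obtain D where "(E has_real_derivative D) (at s)" and "D + c * E s \<ge> 0"
      by auto
    then have "((\<lambda>s. exp (c * s) * E s) has_real_derivative exp (c * s) * (D + c * E s)) (at s)"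
      by (auto intro!: derivative_eq_intros simp: algebra_simps)
    moreover have "exp (c * s) * (D + c * E s) \<ge> 0"
      using \<open>D + c * E s \<ge> 0\<close> by simp
    ultimately show "\<exists>y. ((\<lambda>s. exp (c * s) * E s) has_real_derivative y) (at s) \<and> 0 \<le> y"
      by blast
  qed
  also have "\<dots> \<le> 0"
    using \<open>E b \<le> 0\<close> by (simp add: mult_nonneg_nonpos)
  finally show ?thesis
    by (simp add: mult_le_0_iff)
qed

lemma has_real_derivative_cmod_power2:
  assumes "(f has_vector_derivative f') (at t)"
  shows "((\<lambda>t. (cmod (f t))\<^sup>2) has_real_derivative 2 * Re (f' * cnj (f t))) (at t)"
proof -
  have "((\<lambda>t. f t * cnj (f t)) has_vector_derivative f t * cnj f' + f' * cnj (f t)) (at t)"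
    by (intro has_vector_derivative_mult has_vector_derivative_cnj assms)
  from has_field_derivative_Re[OF this] show ?thesis
    unfolding cmod_power2 by (simp add: power2_eq_square algebra_simps)
qed

lemma cross_terms_bound:
  fixes a b l :: complex
  shows "cmod l * ((cmod a)\<^sup>2 + (cmod b)\<^sup>2 / 4) + (Re (l * b * cnj a) + Re (l * a * cnj b)) / 2 \<ge> 0"
proof -
  have "Re (l * b * cnj a) \<ge> - (cmod l * cmod a * cmod b)" "Re (l * a * cnj b) \<ge> - (cmod l * cmod a * cmod b)"
    using abs_Re_le_cmod[of "l * b * cnj a"] abs_Re_le_cmod[of "l * a * cnj b"] by (simp_all add: norm_mult mult_ac)
  moreover have "cmod l * ((cmod a)\<^sup>2 + (cmod b)\<^sup>2 / 4) = cmod l * (cmod a - cmod b / 2)\<^sup>2 + cmod l * cmod a * cmod b"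
    by (simp add: power2_eq_square algebra_simps)
  moreover have "cmod l * (cmod a - cmod b / 2)\<^sup>2 \<ge> 0"
    by simp
  ultimately show ?thesis
    unfolding add_divide_distrib by linarith
qed

text \<open>
  In the application u t = U (t l) and v t = U' (t l) with m = 2n, and the boundary condition
  v 1 = - u 1 / 2 is the vanishing of K at l.
\<close>

lemma ray_system_endpoint_zero:
  fixes u v :: "real \<Rightarrow> complex" and l :: complex and m :: nat
  assumes u': "\<And>t. (u has_vector_derivative l * v t) (at t)"
    and v': "\<And>t. ((\<lambda>t. of_real t ^ m * v t) has_vector_derivative l / 4 * of_real t ^ m * u t) (at t)"
    and "m > 0" and "Re l \<ge> 0" and "Im l \<noteq> 0" and v1: "v 1 = - u 1 / 2"
  shows "u 1 = 0"
proof -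
  define x where "x = (\<lambda>t. of_real t ^ m * v t)"
  define psi where "psi t = Im l * Im (l * x t * cnj (u t))" for t
  have psi': "(psi has_real_derivative Re l * (Im l)\<^sup>2 * t ^ m * (cmod (u t))\<^sup>2 / 2) (at t)" for t
  proof -
    have "((\<lambda>t. l * x t * cnj (u t)) has_vector_derivative
            l * x t * cnj (l * v t) + l * (l / 4 * of_real t ^ m * u t) * cnj (u t)) (at t)"
      unfolding x_def
      by (intro has_vector_derivative_mult has_vector_derivative_mult_right has_vector_derivative_cnj u' v')
    from DERIV_cmult[OF has_field_derivative_Im[OF this], of "Im l"]
    show ?thesis
      unfolding psi_def by (rule DERIV_cong) (unfold cmod_power2, simp add: x_def power2_eq_square algebra_simps)
  qed
  have "psi 0 \<le> psi 1"
  proof (rule DERIV_nonneg_imp_nondecreasing[of 0 1 psi])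
    fix t :: real
    assume "0 \<le> t" "t \<le> 1"
    with \<open>Re l \<ge> 0\<close> have "Re l * (Im l)\<^sup>2 * t ^ m * (cmod (u t))\<^sup>2 / 2 \<ge> 0"
      by simp
    with psi' show "\<exists>y. (psi has_real_derivative y) (at t) \<and> 0 \<le> y"
      by blast
  qed simp
  moreover have "psi 0 = 0"
    using \<open>m > 0\<close> by (simp add: psi_def x_def power_0_left)
  moreover have "psi 1 = - (Im l)\<^sup>2 * (cmod (u 1))\<^sup>2 / 2"
  proof -
    have "l * x 1 * cnj (u 1) = - l / 2 * (u 1 * cnj (u 1))"
      by (simp add: x_def v1)
    then show ?thesis
      unfolding psi_def cmod_power2 by (simp add: power2_eq_square algebra_simps)
  qed
  ultimately have "(Im l)\<^sup>2 * (cmod (u 1))\<^sup>2 \<le> 0"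
    by simp
  with \<open>Im l \<noteq> 0\<close> show ?thesis
    by (simp add: mult_le_0_iff)
qed

lemma ray_energy_growth:
  fixes u v :: "real \<Rightarrow> complex" and l :: complex and m :: nat
  assumes u': "\<And>t. (u has_vector_derivative l * v t) (at t)"
    and v': "\<And>t. ((\<lambda>t. of_real t ^ m * v t) has_vector_derivative l / 4 * of_real t ^ m * u t) (at t)"
    and "s \<ge> 0"
  defines "E \<equiv> \<lambda>t. (cmod (of_real t ^ m * v t))\<^sup>2 + (cmod (of_real t ^ m * u t))\<^sup>2 / 4"
  shows "\<exists>D. (E has_real_derivative D) (at s) \<and> D + cmod l * E s \<ge> 0"
proof -
  define x where "x = (\<lambda>t. of_real t ^ m * v t)"
  define y where "y = (\<lambda>t. of_real t ^ m * u t)"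
  define p where "p = of_nat m * of_real s ^ (m - 1) * u s * cnj (y s)"
  have E: "E = (\<lambda>t. (cmod (x t))\<^sup>2 + (cmod (y t))\<^sup>2 / 4)"
    by (simp add: E_def x_def y_def)
  have x': "(x has_vector_derivative l / 4 * y s) (at s)"
    using v'[of s] by (simp add: x_def y_def mult.assoc)
  have "((\<lambda>s. of_real s ^ m :: complex) has_vector_derivative of_nat m * of_real s ^ (m - 1)) (at s)"
    by (rule has_vector_derivative_real_field) (auto intro!: derivative_eq_intros)
  then have y': "(y has_vector_derivative of_nat m * of_real s ^ (m - 1) * u s + l * x s) (at s)"
    unfolding y_def x_def
    by (rule has_vector_derivative_eq_rhs[OF has_vector_derivative_mult[OF _ u']]) (simp add: algebra_simps)
  have E': "(E has_real_derivative (Re (l * y s * cnj (x s)) + Re (l * x s * cnj (y s)) + Re p) / 2) (at s)"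
    unfolding E
    by (rule DERIV_cong[OF DERIV_add[OF has_real_derivative_cmod_power2[OF x'] DERIV_cdivide[OF has_real_derivative_cmod_power2[OF y']]]])
       (simp add: p_def field_simps)
  have "p = of_real (of_nat m * s ^ (m - 1) * s ^ m) * (u s * cnj (u s))"
    by (simp add: p_def y_def mult_ac)
  then have "Re p = of_nat m * s ^ (m - 1) * s ^ m * (cmod (u s))\<^sup>2"
    unfolding cmod_power2 by (simp add: power2_eq_square)
  with \<open>s \<ge> 0\<close> have "Re p \<ge> 0"
    by simp
  with cross_terms_bound[of l "x s" "y s"]
  have "(Re (l * y s * cnj (x s)) + Re (l * x s * cnj (y s)) + Re p) / 2 + cmod l * E s \<ge> 0"
    unfolding E add_divide_distrib by linarith
  with E' show ?thesis
    by blast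
qed

lemma ray_system_vanishes:
  fixes u v :: "real \<Rightarrow> complex" and l :: complex and m :: nat
  assumes u': "\<And>t. (u has_vector_derivative l * v t) (at t)"
    and v': "\<And>t. ((\<lambda>t. of_real t ^ m * v t) has_vector_derivative l / 4 * of_real t ^ m * u t) (at t)"
    and "u 1 = 0" and "v 1 = 0" and "0 < t" and "t \<le> 1"
  shows "u t = 0"
proof -
  define E where "E = (\<lambda>t. (cmod (of_real t ^ m * v t))\<^sup>2 + (cmod (of_real t ^ m * u t))\<^sup>2 / 4)"
  have "E t \<le> 0"
  proof (rule backward_gronwall_nonpos[where E = E and t = t and c = "cmod l" and b = 1])
    show "\<exists>D. (E has_real_derivative D) (at s) \<and> D + cmod l * E s \<ge> 0" if "s \<in> {t..1}" for s
      unfolding E_def using that \<open>0 < t\<close> by (intro ray_energy_growth[OF u' v']) simp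
  qed (use \<open>u 1 = 0\<close> \<open>v 1 = 0\<close> \<open>t \<le> 1\<close> in \<open>simp_all add: E_def\<close>)
  then have "(cmod (of_real t ^ m * u t))\<^sup>2 \<le> 0"
    unfolding E_def using zero_le_power2[of "cmod (of_real t ^ m * v t)"] by linarith
  with \<open>0 < t\<close> show ?thesis
    by simp
qed

lemma beta_laplace_1_neq_0:
  assumes n: "n \<ge> 1" and "Re w \<ge> 0"
  shows "beta_laplace n 1 w \<noteq> 0"
proof
  assume K1: "beta_laplace n 1 w = 0"
  show False
  proof (cases "Im w = 0")
    case True
    then have "of_real (Re w) = w"
      by (simp add: complex_eq_iff)
    with K1 beta_laplace_of_real_neq_0[where j = 1 and r = "Re w"] show False
      by simp
  next
    case False
    define u where "u = (\<lambda>t. centred_laplace n (w * of_real t))"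
    define v where "v = (\<lambda>t. centred_laplace' n (w * of_real t))"
    have u': "(u has_vector_derivative w * v t) (at t)" for t
      unfolding u_def v_def
      by (rule has_vector_derivative_real_field,
          rule DERIV_cong[OF centred_laplace_has_field_derivative[THEN DERIV_chain2, OF DERIV_cmult_Id]])
         (simp add: mult.commute)
    have v': "((\<lambda>t. of_real t ^ (2 * n) * v t) has_vector_derivative w / 4 * of_real t ^ (2 * n) * u t) (at t)" for t
      unfolding u_def v_def by (rule has_vector_derivative_real_field[OF centred_laplace'_along_ray[OF n]])
    have "v 1 = - u 1 / 2"
      using K1 by (simp add: u_def v_def centred_laplace_def centred_laplace'_def)
    have "u 1 = 0"
      by (rule ray_system_endpoint_zero[OF u' v']) (use n \<open>Re w \<ge> 0\<close> False \<open>v 1 = - u 1 / 2\<close> in auto)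
    moreover from this have "v 1 = 0"
      using \<open>v 1 = - u 1 / 2\<close> by simp
    ultimately have vanish: "u t = 0" if "t \<in> {0<..1}" for t
      using ray_system_vanishes[OF u' v'] that by simp
    have "continuous_on (closure {0<..1}) u"
      using u' by (intro continuous_at_imp_continuous_on ballI has_vector_derivative_continuous)
    from continuous_constant_on_closure[OF this vanish] have "u 0 = 0"
      by simp
    with beta_laplace_of_real_neq_0[where j = 0 and r = 0] show False
      by (simp add: u_def centred_laplace_def)
  qed
qed

theorem lemma4p6:
  fixes n :: nat and z :: complex
  assumes "n \<ge> 1" and "Delta_tilde n z = 0" and "z \<noteq> 0"
  shows "Re z < 0"
proof (rule ccontr)
  assume "\<not> Re z < 0"
  then have "beta_laplace n 1 z \<noteq> 0"
    using beta_laplace_1_neq_0[OF assms(1)] by simp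
  with beta_laplace_Delta_tilde[OF assms(1,3)] assms(2,3) show False
    by simp
qed

end
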